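(* Let $p$ be an odd prime and let $L$ be a $\mathbb{Z}_p$-lattice of rank $k\ge 4$ with $L\simeq\langle \epsilon_1,p^{e_2}\epsilon_2,p^{e_3}\epsilon_3,\dots,p^{e_k}\epsilon_k\rangle$, where $0\le e_2\le e_3\le\cdots\le e_k$ and $\epsilon_i\in\mathbb{Z}_p^\times$. If $\nu_p(\langle\epsilon_1,p^{e_2}\epsilon_2,p^{e_3}\epsilon_3\rangle)<\infty$ (i.e., this ternary lattice is isotropic), then $\nu_p(L)\le \nu'_p(L)+1$.
   Context: $\langle a_1,\dots,a_k\rangle$ denotes the $\mathbb{Z}_p$-lattice with diagonal Gram matrix $\mathrm{diag}(a_1,\dots,a_k)$; $Q(\mathbf x)=B(\mathbf x,\mathbf x)$; $a$ is represented by $L$ if $a=Q(\mathbf x)$ for some $\mathbf x\in L$. For odd $p$, $SC_p=\{1,\Delta_p,p,p\Delta_p\}$ with $\Delta_p$ a non-square unit. For $L$ of rank $\ge4$ (or an isotropic ternary lattice) and $s\in SC_p$, let $u\ge0$ be least with $sp^{2u}$ represented by $L$; $\nu_{p,s}(L)=\mathrm{ord}_p(sp^{2u})$; $\nu_p(L)=\max_{s}\nu_{p,s}(L)$; $\nu'_p(L)=\max\{\nu_{p,s}(L): s\in SC_p\setminus\{s_0\}\}$ for any $s_0$ with $\nu_{p,s_0}(L)=\nu_p(L)$. For an anisotropic ternary $\mathbb{Z}_p$-lattice $K$ one sets $\nu_p(K)=\infty$. *)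

theory Defs
  imports Main "HOL-Computational_Algebra.Primes"
begin

text \<open>The p-adic integers Z_p, modelled as the inverse limit of the rings Z/p^n Z:
  an element is a coherent sequence x with x n in [0, p^n) and x (n+1) = x n mod p^n.\<close>

definition zp :: "nat \<Rightarrow> (nat \<Rightarrow> int) set" where
  "zp p = {x. \<forall>n. 0 \<le> x n \<and> x n < int p ^ n \<and> x (Suc n) mod (int p ^ n) = x n}"

definition zp_of_int :: "nat \<Rightarrow> int \<Rightarrow> (nat \<Rightarrow> int)" where
  "zp_of_int p a = (\<lambda>n. a mod (int p ^ n))"

definition zp_zero :: "nat \<Rightarrow> int" where
  "zp_zero = (\<lambda>n. 0)"

definition zp_mult :: "nat \<Rightarrow> (nat \<Rightarrow> int) \<Rightarrow> (nat \<Rightarrow> int) \<Rightarrow> (nat \<Rightarrow> int)" where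
  "zp_mult p x y = (\<lambda>n. (x n * y n) mod (int p ^ n))"

definition zp_unit :: "nat \<Rightarrow> (nat \<Rightarrow> int) \<Rightarrow> bool" where
  "zp_unit p x \<longleftrightarrow> x \<in> zp p \<and> x 1 \<noteq> 0"

definition zp_square :: "nat \<Rightarrow> (nat \<Rightarrow> int) \<Rightarrow> bool" where
  "zp_square p x \<longleftrightarrow> (\<exists>y \<in> zp p. x = zp_mult p y y)"

definition zp_nonsquare_unit :: "nat \<Rightarrow> (nat \<Rightarrow> int) \<Rightarrow> bool" where
  "zp_nonsquare_unit p d \<longleftrightarrow> zp_unit p d \<and> \<not> zp_square p d"

definition zp_ord :: "nat \<Rightarrow> (nat \<Rightarrow> int) \<Rightarrow> nat" where
  "zp_ord p x = (LEAST n. x (Suc n) \<noteq> 0)"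

definition qf :: "nat \<Rightarrow> (nat \<Rightarrow> int) list \<Rightarrow> (nat \<Rightarrow> int) list \<Rightarrow> (nat \<Rightarrow> int)" where
  "qf p as xs = (\<lambda>n. (\<Sum>i<length as. (as ! i) n * ((xs ! i) n)^2) mod (int p ^ n))"

definition zp_rep :: "nat \<Rightarrow> (nat \<Rightarrow> int) list \<Rightarrow> (nat \<Rightarrow> int) \<Rightarrow> bool" where
  "zp_rep p as a \<longleftrightarrow> (\<exists>xs. length xs = length as \<and> set xs \<subseteq> zp p \<and> qf p as xs = a)"

definition zp_isotropic :: "nat \<Rightarrow> (nat \<Rightarrow> int) list \<Rightarrow> bool" where
  "zp_isotropic p as \<longleftrightarrow> (\<exists>xs. length xs = length as \<and> set xs \<subseteq> zp p \<and>
      qf p as xs = zp_zero \<and> (\<exists>x \<in> set xs. x \<noteq> zp_zero))"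

definition SC :: "nat \<Rightarrow> (nat \<Rightarrow> int) \<Rightarrow> (nat \<Rightarrow> int) set" where
  "SC p d = {zp_of_int p 1, d, zp_of_int p (int p), zp_mult p (zp_of_int p (int p)) d}"

definition nu_s :: "nat \<Rightarrow> (nat \<Rightarrow> int) list \<Rightarrow> (nat \<Rightarrow> int) \<Rightarrow> nat" where
  "nu_s p as s = (let u = (LEAST u. zp_rep p as (zp_mult p s (zp_of_int p (int p ^ (2*u)))))
                  in zp_ord p (zp_mult p s (zp_of_int p (int p ^ (2*u)))))"

definition nu :: "nat \<Rightarrow> (nat \<Rightarrow> int) \<Rightarrow> (nat \<Rightarrow> int) list \<Rightarrow> nat" where
  "nu p d as = Max (nu_s p as ` SC p d)"

definition nu' :: "nat \<Rightarrow> (nat \<Rightarrow> int) \<Rightarrow> (nat \<Rightarrow> int) list \<Rightarrow> nat" where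
  "nu' p d as = (let s0 = (SOME s. s \<in> SC p d \<and> nu_s p as s = nu p d as)
                 in Max (nu_s p as ` (SC p d - {s0})))"

end

theory Submission
  imports Defs "HOL-Number_Theory.Residues"
begin

(* Write a_i = p^(e_i) eps_i for i < k, indexed from 0, so that e_0 = 0 and <a_0, a_1, a_2> is
   the isotropic ternary part of L = <a_0, ..., a_(k-1)>. A primitive isotropic vector v of that
   part has a unit coordinate v_j, and Q(t v + e_j) = a_j (2 t v_j + 1) runs through p^(e_j) Z_p;
   hence L represents all of p^(e_2) Z_p and every nu_s is at most e_2 + 1. If nu_s < e_2, the
   element s p^(2u) realising nu_s is represented modulo p^(nu_s + 1) by the binary form
   <a_0, a_1> alone, and this forces quadratic-residue conditions modulo p that depend on the
   parities of e_1 and nu_s. They yield two distinct square classes with nu_s >= B while every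
   nu_s <= B + 1, where B = e_2, or B = e_1 + 1 when e_1 is even and -eps_0 eps_1 is a square
   (then <a_0, a_1> is itself isotropic and L represents p^(e_1) Z_p). Removing one class from
   the maximum therefore lowers it by at most 1. *)

section \<open>Congruences modulo powers of a prime\<close>

lemma prime_not_dvd_1: "prime p \<Longrightarrow> \<not> int p dvd 1"
  by (metis int_dvd_int_iff nat_dvd_1_iff_1 not_prime_1 of_nat_1)

lemma prime_not_dvd_2: "prime p \<Longrightarrow> odd p \<Longrightarrow> \<not> int p dvd 2"
  by (metis dvd_imp_le int_dvd_int_iff le_antisym of_nat_numeral prime_ge_2_nat
      zero_less_numeral)

lemma prime_not_dvd_mult: "prime p \<Longrightarrow> \<not> int p dvd a \<Longrightarrow> \<not> int p dvd b \<Longrightarrow> \<not> int p dvd a * b"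
  by (metis prime_dvd_mult_iff prime_nat_int_transfer)

lemma prime_not_dvd_sq_mult:
  "prime p \<Longrightarrow> \<not> int p dvd a \<Longrightarrow> \<not> int p dvd x \<Longrightarrow> \<not> int p dvd a * x\<^sup>2"
  by (metis prime_not_dvd_mult power2_eq_square)

lemma prime_not_dvd_coprime_pow:
  assumes "prime p" "\<not> int p dvd x"
  shows "coprime x (int p ^ n)"
proof -
  have "coprime (int p) x" using assms by (intro prime_imp_coprime) simp_all
  then show ?thesis by (simp add: coprime_commute)
qed

lemma cong_pow_imp_cong: "1 \<le> n \<Longrightarrow> [a = b] (mod int p ^ n) \<Longrightarrow> [a = b] (mod int p)"
  by (erule cong_dvd_modulus) simp

lemma cong_cmult_leftD: "c \<noteq> 0 \<Longrightarrow> [c * a = c * b] (mod c * q) \<Longrightarrow> [a = b] (mod q)"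
  for a b c q :: int
  by (simp add: cong_iff_dvd_diff right_diff_distrib[symmetric])

lemma cong_add_cong_0_right: "[t = 0] (mod m) \<Longrightarrow> [s + t = u] (mod m) \<Longrightarrow> [s = u] (mod m)"
  for s t u m :: int
  by (metis add.right_neutral cong_add cong_refl cong_sym cong_trans)

lemma cong_mult_mod_sq: "[a * (b mod m)\<^sup>2 = a * b\<^sup>2] (mod m)" for a b m :: int
  by (intro cong_scalar_left cong_pow) (simp add: cong_def)

lemma hensel_sqrt_step:
  fixes z c c' :: int
  assumes "prime p" "1 \<le> n" "\<not> int p dvd 2 * z"
    and "[z\<^sup>2 = c] (mod int p ^ n)" "[c' = c] (mod int p ^ n)"
  shows "\<exists>z'. [z'\<^sup>2 = c'] (mod int p ^ Suc n) \<and> [z' = z] (mod int p)"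
proof -
  have "[c' = z\<^sup>2] (mod int p ^ n)" using assms(4,5) cong_sym cong_trans by blast
  then obtain h where "c' - z\<^sup>2 = int p ^ n * h" unfolding cong_iff_dvd_diff by blast
  then have h: "c' = z * z + int p ^ n * h" by (simp add: power2_eq_square algebra_simps)
  have "coprime (2 * z) (int p)"
    using prime_not_dvd_coprime_pow[OF assms(1,3), of 1] by simp
  then obtain t0 where t0: "[2 * z * t0 = 1] (mod int p)" using cong_solve_coprime_int by blast
  have t: "[2 * z * (t0 * h) = h] (mod int p)"
    using cong_scalar_right[OF t0, of h] by (simp add: mult.assoc)
  define z' where "z' = z + int p ^ n * (t0 * h)"
  have "z'\<^sup>2 - c' = int p ^ n * (2 * z * (t0 * h) - h) + int p ^ (n + n) * (t0 * h)\<^sup>2"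
    unfolding z'_def h power2_eq_square power_add by (simp add: algebra_simps)
  moreover have "int p ^ Suc n dvd int p ^ n * (2 * z * (t0 * h) - h)"
    using t by (simp add: cong_iff_dvd_diff mult_dvd_mono)
  moreover have "int p ^ Suc n dvd int p ^ (n + n)" using assms(2) by (intro le_imp_power_dvd) simp
  then have "int p ^ Suc n dvd int p ^ (n + n) * (t0 * h)\<^sup>2" by (rule dvd_mult2)
  ultimately have "[z'\<^sup>2 = c'] (mod int p ^ Suc n)" by (simp add: cong_iff_dvd_diff)
  moreover have "[z' = z] (mod int p)"
    using assms(2) unfolding z'_def by (simp add: cong_iff_dvd_diff)
  ultimately show ?thesis by blast
qed

lemma sqrt_cong_unique:
  fixes w v r :: int
  assumes "prime p" "\<not> int p dvd 2 * r" "[w\<^sup>2 = v\<^sup>2] (mod int p ^ n)"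
    and "[w = r] (mod int p)" "[v = r] (mod int p)"
  shows "[w = v] (mod int p ^ n)"
proof -
  have "w\<^sup>2 - v\<^sup>2 = (w + v) * (w - v)" by (simp add: power2_eq_square algebra_simps)
  with assms(3) have "int p ^ n dvd (w + v) * (w - v)" by (simp only: cong_iff_dvd_diff)
  moreover have "[w + v = r + r] (mod int p)" by (rule cong_add[OF assms(4,5)])
  then have "\<not> int p dvd w + v" using assms(2) cong_dvd_iff by (metis mult_2)
  then have "coprime (w + v) (int p ^ n)" by (rule prime_not_dvd_coprime_pow[OF assms(1)])
  ultimately have "int p ^ n dvd w - v"
    by (metis coprime_commute coprime_dvd_mult_right_iff)
  then show ?thesis by (simp only: cong_iff_dvd_diff)
qed

lemma QuadRes_sq: "QuadRes m (x\<^sup>2)"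
  unfolding QuadRes_def by (intro exI[of _ x]) simp

lemma QuadRes_cong: "[a = b] (mod m) \<Longrightarrow> QuadRes m a \<Longrightarrow> QuadRes m b"
  unfolding QuadRes_def using cong_trans by blast

lemma QuadRes_cancel:
  assumes "prime p" "QuadRes (int p) (a * b)" "QuadRes (int p) a" "\<not> int p dvd a"
  shows "QuadRes (int p) b"
proof -
  obtain r where r: "[r\<^sup>2 = a] (mod int p)" using assms(3) unfolding QuadRes_def by blast
  obtain s where s: "[s\<^sup>2 = a * b] (mod int p)" using assms(2) unfolding QuadRes_def by blast
  have "coprime a (int p)" using prime_not_dvd_coprime_pow[OF assms(1,4), of 1] by simp
  then obtain a' where a': "[a * a' = 1] (mod int p)" using cong_solve_coprime_int by blast
  have "[(s * r * a')\<^sup>2 = (a * b) * a * a'\<^sup>2] (mod int p)"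
    using cong_mult[OF cong_mult[OF s r] cong_refl[of "a'\<^sup>2"]] by (simp add: power_mult_distrib)
  also have "(a * b) * a * a'\<^sup>2 = b * (a * a')\<^sup>2" by (simp add: power2_eq_square ac_simps)
  also have "[b * (a * a')\<^sup>2 = b * 1\<^sup>2] (mod int p)" by (intro cong_scalar_left cong_pow a')
  finally show ?thesis unfolding QuadRes_def by auto
qed

section \<open>Arithmetic of the p-adic integers\<close>

lemma zp_bounds: "x \<in> zp p \<Longrightarrow> 0 \<le> x n \<and> x n < int p ^ n"
  by (simp add: zp_def)

lemma zp_mod_self: "x \<in> zp p \<Longrightarrow> x n mod int p ^ n = x n"
  using zp_bounds[of x p n] by simp

lemma zp_mod_le:
  assumes "x \<in> zp p" "n \<le> m"
  shows "x m mod int p ^ n = x n"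
  using assms(2)
proof (induction m)
  case 0
  then show ?case using zp_bounds[OF assms(1), of 0] by simp
next
  case (Suc m)
  show ?case
  proof (cases "n = Suc m")
    case True
    then show ?thesis using zp_mod_self[OF assms(1), of "Suc m"] by simp
  next
    case False
    then have "n \<le> m" using Suc by simp
    then have "x (Suc m) mod int p ^ n = (x (Suc m) mod int p ^ m) mod int p ^ n"
      by (simp add: mod_mod_cancel le_imp_power_dvd)
    also have "\<dots> = x m mod int p ^ n" using assms(1) by (simp add: zp_def)
    finally show ?thesis using Suc.IH[OF \<open>n \<le> m\<close>] by simp
  qed
qed

lemma zp_cong_le: "x \<in> zp p \<Longrightarrow> n \<le> m \<Longrightarrow> [x m = x n] (mod int p ^ n)"
  by (metis cong_def zp_mod_le zp_mod_self)

lemma zp_cong_1: "x \<in> zp p \<Longrightarrow> 1 \<le> m \<Longrightarrow> [x m = x 1] (mod int p)"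
  using zp_cong_le[of x p 1 m] by simp

lemma zp_eq_0_iff:
  assumes "x \<in> zp p" "[x n = z] (mod int p ^ n)"
  shows "x n = 0 \<longleftrightarrow> int p ^ n dvd z"
  by (metis assms cong_0_iff cong_def mod_0 zp_mod_self)

lemma zp_unit_not_dvd:
  assumes "zp_unit p x" "1 \<le> n"
  shows "\<not> int p dvd x n"
proof
  assume "int p dvd x n"
  then have "x n mod int p ^ 1 = 0" by simp
  then show False using zp_mod_le[of x p 1 n] assms by (simp add: zp_unit_def)
qed

definition coherent :: "nat \<Rightarrow> (nat \<Rightarrow> int) \<Rightarrow> bool" where
  "coherent p f \<longleftrightarrow> (\<forall>n. [f (Suc n) = f n] (mod int p ^ n))"

definition zp_of_seq :: "nat \<Rightarrow> (nat \<Rightarrow> int) \<Rightarrow> (nat \<Rightarrow> int)" where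
  "zp_of_seq p f = (\<lambda>n. f n mod int p ^ n)"

lemma zp_of_seq_in_zp:
  assumes "coherent p f" "p > 0"
  shows "zp_of_seq p f \<in> zp p"
  unfolding zp_def zp_of_seq_def
proof safe
  fix n
  show "0 \<le> f n mod int p ^ n" "f n mod int p ^ n < int p ^ n" using assms(2) by simp_all
  have "[f (Suc n) = f n] (mod int p ^ n)" using assms(1) by (simp add: coherent_def)
  then show "f (Suc n) mod int p ^ Suc n mod int p ^ n = f n mod int p ^ n"
    by (simp add: cong_def mod_mod_cancel le_imp_power_dvd)
qed

lemma zp_of_seq_cong: "[zp_of_seq p f n = f n] (mod int p ^ n)"
  by (simp add: zp_of_seq_def cong_def)

lemma zp_coherent: "x \<in> zp p \<Longrightarrow> coherent p x"
  unfolding coherent_def using zp_cong_le by (metis le_SucI order_refl)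

lemma coherent_const: "coherent p (\<lambda>n. c)"
  by (simp add: coherent_def)

lemma coherent_add: "coherent p f \<Longrightarrow> coherent p g \<Longrightarrow> coherent p (\<lambda>n. f n + g n)"
  by (simp add: coherent_def cong_add)

lemma coherent_diff: "coherent p f \<Longrightarrow> coherent p g \<Longrightarrow> coherent p (\<lambda>n. f n - g n)"
  by (simp add: coherent_def cong_diff)

lemma coherent_mult: "coherent p f \<Longrightarrow> coherent p g \<Longrightarrow> coherent p (\<lambda>n. f n * g n)"
  by (simp add: coherent_def cong_mult)

lemma coherent_uminus: "coherent p f \<Longrightarrow> coherent p (\<lambda>n. - f n)"
  by (simp add: coherent_def cong_uminus)

lemma zp_zero_in_zp: "p > 0 \<Longrightarrow> zp_zero \<in> zp p"
  by (simp add: zp_def zp_zero_def)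

lemma zp_of_int_in_zp: "p > 0 \<Longrightarrow> zp_of_int p a \<in> zp p"
  using zp_of_seq_in_zp[OF coherent_const, of p a] by (simp add: zp_of_seq_def zp_of_int_def)

lemma zp_mult_in_zp: "p > 0 \<Longrightarrow> x \<in> zp p \<Longrightarrow> y \<in> zp p \<Longrightarrow> zp_mult p x y \<in> zp p"
  using zp_of_seq_in_zp[OF coherent_mult[OF zp_coherent zp_coherent]]
  by (simp add: zp_of_seq_def zp_mult_def)

lemma zp_of_int_cong: "[zp_of_int p a n = a] (mod int p ^ n)"
  by (simp add: zp_of_int_def cong_def)

lemma zp_of_unique_residues:
  fixes P :: "nat \<Rightarrow> int \<Rightarrow> bool"
  assumes "p > 0"
    and unique: "\<And>n. \<exists>!z. 0 \<le> z \<and> z < int p ^ n \<and> P n z"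
    and reduce: "\<And>n z. P (Suc n) z \<Longrightarrow> P n (z mod int p ^ n)"
  shows "\<exists>x \<in> zp p. \<forall>n. P n (x n)"
proof -
  define x where "x n = (THE z. 0 \<le> z \<and> z < int p ^ n \<and> P n z)" for n
  have x: "0 \<le> x n \<and> x n < int p ^ n \<and> P n (x n)" for n
    unfolding x_def by (rule theI'[OF unique])
  have "x (Suc n) mod int p ^ n = x n" for n
    using unique[of n] x[of n] x[of "Suc n"] reduce[of n] \<open>p > 0\<close> by auto
  then have "x \<in> zp p" using x by (simp add: zp_def)
  then show ?thesis using x by blast
qed

lemma unique_residue:
  assumes "p > 0" "P n (z mod int p ^ n)"
    and "\<And>w v. P n w \<Longrightarrow> P n v \<Longrightarrow> [w = v] (mod int p ^ n)"
  shows "\<exists>!z. 0 \<le> z \<and> z < int p ^ n \<and> P n z"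
proof (rule ex1I[of _ "z mod int p ^ n"])
  show "0 \<le> z mod int p ^ n \<and> z mod int p ^ n < int p ^ n \<and> P n (z mod int p ^ n)"
    using assms(1,2) by simp
  fix w assume "0 \<le> w \<and> w < int p ^ n \<and> P n w"
  with assms(2,3) show "w = z mod int p ^ n"
    by (metis cong_def mod_mod_trivial mod_pos_pos_trivial)
qed

lemma zp_unit_inverse:
  assumes "prime p" "zp_unit p x"
  shows "\<exists>y \<in> zp p. \<forall>n. [x n * y n = 1] (mod int p ^ n)"
proof (rule zp_of_unique_residues)
  show "p > 0" using assms(1) prime_gt_0_nat by blast
  fix n
  have cop: "coprime (x n) (int p ^ n)"
    using prime_not_dvd_coprime_pow[OF assms(1) zp_unit_not_dvd[OF assms(2)]] by (cases n) auto
  then obtain z where "[x n * z = 1] (mod int p ^ n)" using cong_solve_coprime_int by blast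
  then have "[x n * (z mod int p ^ n) = 1] (mod int p ^ n)"
    by (simp add: cong_def mod_mult_right_eq)
  moreover have "[w = v] (mod int p ^ n)"
    if "[x n * w = 1] (mod int p ^ n)" "[x n * v = 1] (mod int p ^ n)" for w v
    using that cong_mult_lcancel[OF cop] cong_sym cong_trans by blast
  ultimately show "\<exists>!z. 0 \<le> z \<and> z < int p ^ n \<and> [x n * z = 1] (mod int p ^ n)"
    by (rule unique_residue[OF \<open>p > 0\<close>])
next
  fix n z
  assume "[x (Suc n) * z = 1] (mod int p ^ Suc n)"
  then have one: "[x (Suc n) * z = 1] (mod int p ^ n)" by (rule cong_dvd_modulus) simp
  have "[x n = x (Suc n)] (mod int p ^ n)"
    using zp_cong_le[of x p n "Suc n"] assms(2) by (simp add: zp_unit_def cong_sym)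
  then have "[x n * z = x (Suc n) * z] (mod int p ^ n)" by (rule cong_scalar_right)
  then have "[x n * (z mod int p ^ n) = x (Suc n) * z] (mod int p ^ n)"
    by (simp add: cong_def mod_mult_right_eq)
  then show "[x n * (z mod int p ^ n) = 1] (mod int p ^ n)" using one by (rule cong_trans)
qed

lemma sqrt_mod_pow_exists:
  assumes "prime p" "odd p" "c \<in> zp p" "[r\<^sup>2 = c 1] (mod int p)" "\<not> int p dvd r"
  shows "\<exists>z. [z\<^sup>2 = c n] (mod int p ^ n) \<and> (1 \<le> n \<longrightarrow> [z = r] (mod int p))"
proof (induction n)
  case 0
  show ?case by simp
next
  case (Suc n)
  show ?case
  proof (cases "n = 0")
    case True
    then show ?thesis using assms(4) by auto
  next
    case False
    then obtain z where z: "[z\<^sup>2 = c n] (mod int p ^ n)" "[z = r] (mod int p)"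
      using Suc.IH by auto
    have "\<not> int p dvd 2 * z"
      using prime_not_dvd_mult[OF assms(1) prime_not_dvd_2[OF assms(1,2)]] assms(5) z(2)
        cong_dvd_iff by blast
    moreover have "[c (Suc n) = c n] (mod int p ^ n)" using zp_cong_le[OF assms(3)] by simp
    ultimately obtain z' where "[z'\<^sup>2 = c (Suc n)] (mod int p ^ Suc n)" "[z' = z] (mod int p)"
      using hensel_sqrt_step[OF assms(1) _ _ z(1)] False by (metis less_one not_less)
    then show ?thesis using z(2) cong_trans by blast
  qed
qed

lemma zp_sqrt:
  assumes "prime p" "odd p" "c \<in> zp p" "[r\<^sup>2 = c 1] (mod int p)" "\<not> int p dvd r"
  shows "\<exists>x \<in> zp p. \<forall>n. [(x n)\<^sup>2 = c n] (mod int p ^ n)"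
proof -
  define P where "P n z \<longleftrightarrow> [z\<^sup>2 = c n] (mod int p ^ n) \<and> (1 \<le> n \<longrightarrow> [z = r] (mod int p))"
    for n z
  have p0: "p > 0" using assms(1) prime_gt_0_nat by blast
  have P_mod: "P n (z mod int p ^ n)" if "P n z" for n z
  proof -
    have "[(z mod int p ^ n)\<^sup>2 = z\<^sup>2] (mod int p ^ n)" by (intro cong_pow) simp
    moreover have "[z mod int p ^ n = z] (mod int p)" if "1 \<le> n"
      using cong_pow_imp_cong[OF that, of "z mod int p ^ n" z] by simp
    ultimately show ?thesis using \<open>P n z\<close> unfolding P_def by (meson cong_trans)
  qed
  have "\<exists>x \<in> zp p. \<forall>n. P n (x n)"
  proof (rule zp_of_unique_residues[OF p0])
    fix n
    obtain z where "P n z" using sqrt_mod_pow_exists[OF assms] unfolding P_def by blast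
    moreover have "[w = v] (mod int p ^ n)" if "P n w" "P n v" for w v
    proof (cases "n = 0")
      case False
      have "\<not> int p dvd 2 * r"
        using prime_not_dvd_mult[OF assms(1) prime_not_dvd_2[OF assms(1,2)] assms(5)] .
      then show ?thesis using that False sqrt_cong_unique[OF assms(1)]
        unfolding P_def by (meson cong_sym cong_trans less_one not_less)
    qed simp
    ultimately show "\<exists>!z. 0 \<le> z \<and> z < int p ^ n \<and> P n z"
      by (intro unique_residue[OF p0] P_mod)
  next
    fix n z
    assume "P (Suc n) z"
    moreover have "[c (Suc n) = c n] (mod int p ^ n)" using zp_cong_le[OF assms(3)] by simp
    moreover have "[z\<^sup>2 = c (Suc n)] (mod int p ^ n)" if "[z\<^sup>2 = c (Suc n)] (mod int p ^ Suc n)"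
      using that by (rule cong_dvd_modulus) simp
    ultimately have "P n z" unfolding P_def by (meson cong_trans le_SucI)
    then show "P n (z mod int p ^ n)" by (rule P_mod)
  qed
  then show ?thesis unfolding P_def by blast
qed

definition zp_div_pow :: "nat \<Rightarrow> nat \<Rightarrow> (nat \<Rightarrow> int) \<Rightarrow> (nat \<Rightarrow> int)" where
  "zp_div_pow p m x = zp_of_seq p (\<lambda>n. x (n + m) div int p ^ m)"

lemma pow_mult_div_pow:
  assumes "x \<in> zp p" "x m = 0"
  shows "int p ^ m * (x (n + m) div int p ^ m) = x (n + m)"
  using zp_mod_le[OF assms(1), of m "n + m"] assms(2) by (simp add: dvd_eq_mod_eq_0)

lemma zp_div_pow_in_zp:
  assumes "p > 0" "x \<in> zp p" "x m = 0"
  shows "zp_div_pow p m x \<in> zp p"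
  unfolding zp_div_pow_def
proof (rule zp_of_seq_in_zp[OF _ assms(1)])
  show "coherent p (\<lambda>n. x (n + m) div int p ^ m)"
    unfolding coherent_def
  proof
    fix n
    have "[x (Suc n + m) = x (n + m)] (mod int p ^ m * int p ^ n)"
      using zp_cong_le[OF assms(2), of "n + m" "Suc n + m"] by (simp add: power_add mult.commute)
    then have "[int p ^ m * (x (Suc n + m) div int p ^ m) = int p ^ m * (x (n + m) div int p ^ m)]
        (mod int p ^ m * int p ^ n)"
      by (simp only: pow_mult_div_pow[OF assms(2,3)])
    then show "[x (Suc n + m) div int p ^ m = x (n + m) div int p ^ m] (mod int p ^ n)"
      by (rule cong_cmult_leftD[rotated]) (use assms(1) in simp)
  qed
qed

lemma zp_div_pow_cong:
  assumes "x \<in> zp p" "x m = 0"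
  shows "[int p ^ m * zp_div_pow p m x n = x (n + m)] (mod int p ^ (n + m))"
proof -
  have "[int p ^ m * zp_div_pow p m x n = int p ^ m * (x (n + m) div int p ^ m)]
      (mod int p ^ m * int p ^ n)"
    unfolding zp_div_pow_def by (intro cong_cmult_leftI zp_of_seq_cong)
  then show ?thesis by (simp add: pow_mult_div_pow[OF assms] power_add mult.commute)
qed

lemma zp_div_pow_cong_level:
  assumes "x \<in> zp p" "x m = 0"
  shows "[int p ^ m * zp_div_pow p m x n = x n] (mod int p ^ n)"
proof -
  have "[int p ^ m * zp_div_pow p m x n = x (n + m)] (mod int p ^ n)"
    using zp_div_pow_cong[OF assms] by (rule cong_dvd_modulus) (simp add: le_imp_power_dvd)
  then show ?thesis using zp_cong_le[OF assms(1), of n "n + m"] cong_trans by simp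
qed

section \<open>Isotropic vectors of diagonal forms over Z_p\<close>

lemma qf_cong: "[qf p as xs n = (\<Sum>i<length as. (as!i) n * ((xs!i) n)\<^sup>2)] (mod int p ^ n)"
  by (simp add: qf_def cong_def)

lemma qf_eqI:
  assumes "y \<in> zp p" "\<And>n. [(\<Sum>i<length as. (as!i) n * ((xs!i) n)\<^sup>2) = y n] (mod int p ^ n)"
  shows "qf p as xs = y"
proof
  fix n
  show "qf p as xs n = y n"
    using assms(2)[of n] zp_mod_self[OF assms(1), of n] by (simp add: qf_def cong_def)
qed

lemma qf_append_zero:
  assumes "length vs = length as"
  shows "qf p (as @ bs) (vs @ replicate (length bs) zp_zero) = qf p as vs"
proof
  fix n
  have "(\<Sum>i<length (as @ bs). ((as @ bs)!i) n * (((vs @ replicate (length bs) zp_zero)!i) n)\<^sup>2)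
      = (\<Sum>i<length as. (as!i) n * ((vs!i) n)\<^sup>2)"
    using assms by (intro sum.mono_neutral_cong_right) (auto simp: nth_append zp_zero_def)
  then show "qf p (as @ bs) (vs @ replicate (length bs) zp_zero) n = qf p as vs n"
    by (simp add: qf_def)
qed

lemma zp_list_common_level:
  assumes "set xs \<subseteq> zp p" "\<exists>x\<in>set xs. x \<noteq> zp_zero"
  shows "\<exists>m. (\<forall>x\<in>set xs. x m = 0) \<and> (\<exists>x\<in>set xs. x (Suc m) \<noteq> 0)"
proof -
  have zero_at_0: "x 0 = 0" if "x \<in> set xs" for x
    using zp_bounds[of x p 0] assms(1) that by auto
  obtain x n where x: "x \<in> set xs" "x n \<noteq> 0"
    using assms(2) unfolding zp_zero_def by blast
  then obtain n' where "n = Suc n'" using zero_at_0 by (cases n) auto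
  define m where "m = (LEAST m. \<exists>x\<in>set xs. x (Suc m) \<noteq> 0)"
  have "\<exists>x\<in>set xs. x (Suc m) \<noteq> 0"
    unfolding m_def by (rule LeastI[of _ n']) (use x \<open>n = Suc n'\<close> in blast)
  moreover have "x m = 0" if "x \<in> set xs" for x
  proof (cases m)
    case (Suc m')
    then have "m' < m" by simp
    then have "\<not> (\<exists>x\<in>set xs. x (Suc m') \<noteq> 0)" unfolding m_def by (rule not_less_Least)
    then show ?thesis using that Suc by auto
  qed (use zero_at_0 that in simp)
  ultimately show ?thesis by blast
qed

lemma sq_cong_pow_scale:
  fixes x w q :: int
  assumes "q ^ (n + m) dvd x - q ^ m * w"
  shows "q ^ (n + 2 * m) dvd x\<^sup>2 - q ^ (2 * m) * w\<^sup>2"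
proof -
  have "q ^ m dvd q ^ (n + m)" by (simp add: le_imp_power_dvd)
  then have "q ^ m dvd x - q ^ m * w" using assms dvd_trans by blast
  then have "q ^ m dvd (x - q ^ m * w) + 2 * (q ^ m * w)" by (intro dvd_add) simp_all
  then have "q ^ m dvd x + q ^ m * w" by simp
  with assms have "q ^ (n + m) * q ^ m dvd (x - q ^ m * w) * (x + q ^ m * w)"
    by (rule mult_dvd_mono)
  moreover have "q ^ (2 * m) * w\<^sup>2 = (q ^ m * w)\<^sup>2"
    by (simp add: power_mult_distrib power_mult mult.commute)
  then have "(x - q ^ m * w) * (x + q ^ m * w) = x\<^sup>2 - q ^ (2 * m) * w\<^sup>2"
    by (simp add: power2_eq_square algebra_simps)
  moreover have "q ^ (n + m) * q ^ m = q ^ (n + 2 * m)" by (simp add: power_add mult_2)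
  ultimately show ?thesis by simp
qed

lemma diag_term_div_pow:
  assumes "x \<in> zp p" "b \<in> zp p" "[int p ^ m * v = x (n + m)] (mod int p ^ (n + m))"
  shows "[b (n + 2 * m) * (x (n + 2 * m))\<^sup>2 = int p ^ (2 * m) * (b n * v\<^sup>2)]
    (mod int p ^ (n + 2 * m))"
proof -
  let ?N = "n + 2 * m"
  have "[x ?N = int p ^ m * v] (mod int p ^ (n + m))"
    using zp_cong_le[OF assms(1), of "n + m" ?N] assms(3) by (metis cong_sym cong_trans le_add1
        mult_2 add.assoc)
  then have "[(x ?N)\<^sup>2 = int p ^ (2 * m) * v\<^sup>2] (mod int p ^ ?N)"
    unfolding cong_iff_dvd_diff by (rule sq_cong_pow_scale)
  then have "[b ?N * (x ?N)\<^sup>2 = b ?N * (int p ^ (2 * m) * v\<^sup>2)] (mod int p ^ ?N)"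
    by (rule cong_scalar_left)
  moreover have "[b ?N = b n] (mod int p ^ n)" using zp_cong_le[OF assms(2)] by simp
  then have "[int p ^ (2 * m) * b ?N = int p ^ (2 * m) * b n] (mod int p ^ (2 * m) * int p ^ n)"
    by (rule cong_cmult_leftI)
  then have "[int p ^ (2 * m) * b ?N = int p ^ (2 * m) * b n] (mod int p ^ ?N)"
    by (simp only: power_add[symmetric] add.commute)
  then have "[int p ^ (2 * m) * b ?N * v\<^sup>2 = int p ^ (2 * m) * b n * v\<^sup>2] (mod int p ^ ?N)"
    by (rule cong_scalar_right)
  then have "[b ?N * (int p ^ (2 * m) * v\<^sup>2) = int p ^ (2 * m) * (b n * v\<^sup>2)] (mod int p ^ ?N)"
    by (simp only: ac_simps)
  ultimately show ?thesis by (rule cong_trans)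
qed

lemma qf_zp_div_pow_zero:
  assumes "p > 0" "set bs \<subseteq> zp p" "set xs \<subseteq> zp p" "length xs = length bs"
    and "\<forall>x\<in>set xs. x m = 0" "qf p bs xs = zp_zero"
  shows "qf p bs (map (zp_div_pow p m) xs) = zp_zero"
proof (rule qf_eqI[OF zp_zero_in_zp[OF assms(1)]])
  fix n
  let ?N = "n + 2 * m" and ?S = "\<lambda>n. \<Sum>i<length bs. (bs!i) n * ((map (zp_div_pow p m) xs!i) n)\<^sup>2"
  have terms: "[(bs!i) ?N * ((xs!i) ?N)\<^sup>2
      = int p ^ (2 * m) * ((bs!i) n * ((map (zp_div_pow p m) xs!i) n)\<^sup>2)]
      (mod int p ^ ?N)" if "i < length bs" for i
  proof -
    have x: "xs!i \<in> zp p" "(xs!i) m = 0" and b: "bs!i \<in> zp p" using assms(2-5) that by auto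
    show ?thesis
      using diag_term_div_pow[OF x(1) b zp_div_pow_cong[OF x]] assms(4) that by simp
  qed
  have scaled:
    "[(\<Sum>i<length bs. (bs!i) ?N * ((xs!i) ?N)\<^sup>2) = int p ^ (2 * m) * ?S n] (mod int p ^ ?N)"
    unfolding sum_distrib_left by (rule cong_sum) (simp add: terms)
  have isotropic: "[0 = (\<Sum>i<length bs. (bs!i) ?N * ((xs!i) ?N)\<^sup>2)] (mod int p ^ ?N)"
    using qf_cong[of p bs xs ?N] assms(6) by (simp add: zp_zero_def)
  have "[int p ^ (2 * m) * ?S n = int p ^ (2 * m) * 0] (mod int p ^ ?N)"
    using cong_trans[OF cong_sym[OF scaled] cong_sym[OF isotropic]] by simp
  then have "[int p ^ (2 * m) * ?S n = int p ^ (2 * m) * 0] (mod int p ^ (2 * m) * int p ^ n)"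
    by (simp only: power_add[symmetric] add.commute)
  then have "[?S n = 0] (mod int p ^ n)" by (rule cong_cmult_leftD[rotated]) (use assms(1) in simp)
  then show "[?S n = zp_zero n] (mod int p ^ n)" by (simp add: zp_zero_def)
qed

lemma zp_isotropic_primitive:
  assumes "prime p" "set bs \<subseteq> zp p" "zp_isotropic p bs"
  shows "\<exists>vs. length vs = length bs \<and> set vs \<subseteq> zp p \<and> qf p bs vs = zp_zero
    \<and> (\<exists>j<length bs. zp_unit p (vs!j))"
proof -
  have p0: "p > 0" using assms(1) prime_gt_0_nat by blast
  obtain xs where xs: "length xs = length bs" "set xs \<subseteq> zp p" "qf p bs xs = zp_zero"
    and nonzero: "\<exists>x\<in>set xs. x \<noteq> zp_zero"
    using assms(3) unfolding zp_isotropic_def by blast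
  obtain m where m: "\<forall>x\<in>set xs. x m = 0" and "\<exists>x\<in>set xs. x (Suc m) \<noteq> 0"
    using zp_list_common_level[OF xs(2) nonzero] by blast
  then obtain j where j: "j < length bs" "(xs!j) (Suc m) \<noteq> 0"
    using xs(1) by (metis in_set_conv_nth)
  define vs where "vs = map (zp_div_pow p m) xs"
  have vs_zp: "set vs \<subseteq> zp p"
    using zp_div_pow_in_zp[OF p0] xs(2) m unfolding vs_def by auto
  have xj: "xs!j \<in> zp p" "(xs!j) m = 0" using xs(1,2) m j(1) by auto
  have "(vs!j) 1 \<noteq> 0"
  proof
    assume "(vs!j) 1 = 0"
    then have "[(xs!j) (Suc m) = 0] (mod int p ^ Suc m)"
      using zp_div_pow_cong[OF xj, of 1] xs(1) j(1) unfolding vs_def by (simp add: cong_sym)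
    then show False using zp_eq_0_iff[OF xj(1)] j(2) by simp
  qed
  then have "zp_unit p (vs!j)" using vs_zp xs(1) j(1) unfolding zp_unit_def vs_def by auto
  moreover have "qf p bs vs = zp_zero"
    unfolding vs_def by (rule qf_zp_div_pow_zero[OF p0 assms(2) xs(2,1) m xs(3)])
  moreover have "length vs = length bs" using xs(1) by (simp add: vs_def)
  ultimately show ?thesis using vs_zp j(1) by blast
qed

lemma sum_sq_shift_basis:
  fixes a v :: "nat \<Rightarrow> int"
  assumes "finite S" "j \<in> S"
  shows "(\<Sum>i\<in>S. a i * (t * v i + (if i = j then 1 else 0))\<^sup>2)
       = t\<^sup>2 * (\<Sum>i\<in>S. a i * (v i)\<^sup>2) + a j * (2 * t * v j + 1)"
proof -
  have "(\<Sum>i\<in>S. a i * (t * v i + (if i = j then 1 else 0))\<^sup>2)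
      = (\<Sum>i\<in>S. t\<^sup>2 * (a i * (v i)\<^sup>2) + (if i = j then a i * (2 * t * v i + 1) else 0))"
    by (rule sum.cong) (auto simp: power2_eq_square algebra_simps)
  also have "\<dots> = t\<^sup>2 * (\<Sum>i\<in>S. a i * (v i)\<^sup>2) + a j * (2 * t * v j + 1)"
    using assms by (simp add: sum.distrib sum_distrib_left)
  finally show ?thesis .
qed

lemma diag_isotropic_shift_cong:
  assumes "length vs = length as" "qf p as vs = zp_zero" "j < length as"
  shows "[(\<Sum>i<length as. (as!i) n * (t * (vs!i) n + (if i = j then 1 else 0))\<^sup>2)
    = (as!j) n * (2 * t * (vs!j) n + 1)] (mod int p ^ n)"
proof -
  have "[\<Sum>i<length as. (as!i) n * ((vs!i) n)\<^sup>2 = 0] (mod int p ^ n)"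
    using qf_cong[of p as vs n] assms(1,2) by (simp add: zp_zero_def cong_sym_eq)
  then have "[t\<^sup>2 * (\<Sum>i<length as. (as!i) n * ((vs!i) n)\<^sup>2) + (as!j) n * (2 * t * (vs!j) n + 1)
      = t\<^sup>2 * 0 + (as!j) n * (2 * t * (vs!j) n + 1)] (mod int p ^ n)"
    by (intro cong_add cong_scalar_left cong_refl)
  then show ?thesis using assms(3) by (simp add: sum_sq_shift_basis)
qed

(* Q(t v + e_j) = a_j (2 t v_j + 1) runs through all of p^e Z_p as t varies, because
   a_j = p^e eps with 2 eps v_j a unit. The hypothesis y e = 0 says that y lies in p^e Z_p. *)

lemma zp_rep_of_isotropic_unit_coord:
  assumes "prime p" "odd p" "length vs = length as" "set vs \<subseteq> zp p" "qf p as vs = zp_zero"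
    and "j < length as" "as!j = zp_mult p (zp_of_int p (int p ^ e)) eps" "zp_unit p eps"
    and "zp_unit p (vs!j)" "y \<in> zp p" "y e = 0"
  shows "zp_rep p as y"
proof -
  have p0: "p > 0" using assms(1) prime_gt_0_nat by blast
  have eps: "eps \<in> zp p" and vj: "vs!j \<in> zp p" using assms(8,9) by (auto simp: zp_unit_def)
  define u where "u = zp_of_seq p (\<lambda>n. 2 * eps n * (vs!j) n)"
  have "\<not> int p dvd 2 * eps 1 * (vs!j) 1"
    using assms(1,2,8,9) by (intro prime_not_dvd_mult prime_not_dvd_2 zp_unit_not_dvd) auto
  moreover have "u \<in> zp p"
    unfolding u_def
    by (intro zp_of_seq_in_zp[OF _ p0] coherent_mult coherent_const zp_coherent eps vj)
  ultimately have "zp_unit p u" by (simp add: zp_unit_def u_def zp_of_seq_def dvd_eq_mod_eq_0)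
  then obtain I where I: "I \<in> zp p" "\<And>n. [u n * I n = 1] (mod int p ^ n)"
    using zp_unit_inverse[OF assms(1)] by blast
  have inverse: "[2 * eps n * (vs!j) n * I n = 1] (mod int p ^ n)" for n
    using I(2)[of n] unfolding u_def zp_of_seq_def by (simp add: cong_def mod_mult_left_eq)
  define y' where "y' = zp_div_pow p e y"
  have y': "y' \<in> zp p" "\<And>n. [int p ^ e * y' n = y n] (mod int p ^ n)"
    unfolding y'_def
    using zp_div_pow_in_zp[OF p0 assms(10,11)] zp_div_pow_cong_level[OF assms(10,11)]
    by auto
  define t where "t n = (y' n - eps n) * I n" for n
  have t: "coherent p t"
    unfolding t_def by (intro coherent_mult coherent_diff zp_coherent y' eps I)
  define xs where "xs = map (\<lambda>i. zp_of_seq p (\<lambda>n. t n * (vs!i) n + (if i = j then 1 else 0)))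
      [0..<length as]"
  have "length xs = length as" by (simp add: xs_def)
  moreover have "zp_of_seq p (\<lambda>n. t n * (vs!i) n + c) \<in> zp p" if "i < length as" for i c
    using assms(3,4) that
    by (intro zp_of_seq_in_zp[OF _ p0] coherent_add coherent_mult coherent_const t zp_coherent) auto
  then have "set xs \<subseteq> zp p" by (auto simp: xs_def)
  moreover have "qf p as xs = y"
  proof (rule qf_eqI[OF assms(10)])
    fix n
    let ?v = "\<lambda>i. (vs!i) n" and ?a = "\<lambda>i. (as!i) n"
    have "[(\<Sum>i<length as. ?a i * ((xs!i) n)\<^sup>2)
        = (\<Sum>i<length as. ?a i * (t n * ?v i + (if i = j then 1 else 0))\<^sup>2)] (mod int p ^ n)"
      by (rule cong_sum) (simp add: xs_def zp_of_seq_def cong_mult_mod_sq)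
    also have "[(\<Sum>i<length as. ?a i * (t n * ?v i + (if i = j then 1 else 0))\<^sup>2)
        = ?a j * (2 * t n * ?v j + 1)] (mod int p ^ n)"
      by (rule diag_isotropic_shift_cong[OF assms(3,5,6)])
    also have "[?a j * (2 * t n * ?v j + 1) = (int p ^ e * eps n) * (2 * t n * ?v j + 1)]
        (mod int p ^ n)"
      unfolding assms(7)
      by (intro cong_scalar_right) (simp add: zp_mult_def zp_of_int_def cong_def mod_mult_left_eq)
    also have "(int p ^ e * eps n) * (2 * t n * ?v j + 1)
        = int p ^ e * ((2 * eps n * ?v j * I n) * (y' n - eps n) + eps n)"
      by (simp add: t_def algebra_simps)
    also have "[\<dots> = int p ^ e * (1 * (y' n - eps n) + eps n)] (mod int p ^ n)"
      by (intro cong_mult cong_add cong_refl inverse)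
    also have "int p ^ e * (1 * (y' n - eps n) + eps n) = int p ^ e * y' n" by simp
    also have "[\<dots> = y n] (mod int p ^ n)" by (rule y'(2))
    finally show "[(\<Sum>i<length as. ?a i * ((xs!i) n)\<^sup>2) = y n] (mod int p ^ n)" .
  qed
  ultimately show ?thesis unfolding zp_rep_def by blast
qed

section \<open>Binary forms modulo powers of p\<close>

lemma QuadRes_neg_mult_of_zero_mod_p:
  assumes "prime p" "\<not> int p dvd E1" "\<not> int p dvd X" "[E1 * X\<^sup>2 + E2 * Y\<^sup>2 = 0] (mod int p)"
  shows "QuadRes (int p) (- (E1 * E2))"
proof -
  have "\<not> int p dvd Y"
  proof
    assume "int p dvd Y"
    then have "[E2 * Y\<^sup>2 = 0] (mod int p)" by (simp add: cong_0_iff power2_eq_square)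
    then have "[E1 * X\<^sup>2 = 0] (mod int p)" using assms(4) by (rule cong_add_cong_0_right)
    then show False using prime_not_dvd_sq_mult[OF assms(1-3)] by (simp add: cong_0_iff)
  qed
  have "[E1 * (E1 * X\<^sup>2 + E2 * Y\<^sup>2) = E1 * 0] (mod int p)" using assms(4) by (rule cong_scalar_left)
  then have "[(E1 * X)\<^sup>2 = Y\<^sup>2 * (- (E1 * E2))] (mod int p)"
    by (simp add: cong_iff_dvd_diff power2_eq_square algebra_simps)
  then have "QuadRes (int p) (Y\<^sup>2 * (- (E1 * E2)))" unfolding QuadRes_def by blast
  moreover have "\<not> int p dvd Y\<^sup>2"
    using prime_not_dvd_sq_mult[OF assms(1) prime_not_dvd_1[OF assms(1)] \<open>\<not> int p dvd Y\<close>] by simp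
  ultimately show ?thesis using QuadRes_cancel[OF assms(1) _ QuadRes_sq] by blast
qed

text \<open>The conditions modulo p imposed by \<open>E1 X\<^sup>2 + p\<^sup>a E2 Y\<^sup>2 \<equiv> p\<^sup>n w (mod p\<^sup>n\<^sup>+\<^sup>1)\<close>
  when E1, E2 and w are prime to p.\<close>

definition binary_rep_cond :: "nat \<Rightarrow> int \<Rightarrow> int \<Rightarrow> int \<Rightarrow> nat \<Rightarrow> nat \<Rightarrow> bool" where
  "binary_rep_cond p E1 E2 w a n \<longleftrightarrow>
     (odd a \<and> even n \<longrightarrow> QuadRes (int p) (w * E1)) \<and>
     (odd a \<and> odd n \<longrightarrow> QuadRes (int p) (w * E2)) \<and>
     (even a \<and> odd n \<longrightarrow> a < n \<and> QuadRes (int p) (- (E1 * E2)))"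

lemma binary_rep_cond_add_2:
  assumes "binary_rep_cond p E1 E2 w a' n" "a = a' \<or> a = a' + 2"
  shows "binary_rep_cond p E1 E2 w a (n + 2)"
  using assms unfolding binary_rep_cond_def by auto

lemma binary_rep_cond_cong:
  assumes "binary_rep_cond p E1 E2 w a n"
    and "[E1 = E1'] (mod int p)" "[E2 = E2'] (mod int p)" "[w = w'] (mod int p)"
  shows "binary_rep_cond p E1' E2' w' a n"
proof -
  have "[w * E1 = w' * E1'] (mod int p)" "[w * E2 = w' * E2'] (mod int p)"
    "[- (E1 * E2) = - (E1' * E2')] (mod int p)"
    using assms(2-4) by (auto intro: cong_mult cong_uminus)
  then show ?thesis using assms(1) QuadRes_cong unfolding binary_rep_cond_def by meson
qed

lemma binary_rep_cong_cancel_p2: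
  fixes Z w :: int
  assumes "prime p" "\<not> int p dvd w" "[int p ^ 2 * Z = int p ^ n * w] (mod int p ^ Suc n)"
  shows "\<exists>n'. n = n' + 2 \<and> [Z = int p ^ n' * w] (mod int p ^ Suc n')"
proof -
  have p0: "int p > 0" using assms(1) prime_gt_0_nat by simp
  have dvd: "int p ^ Suc n dvd int p ^ 2 * Z - int p ^ n * w"
    using assms(3) by (simp only: cong_iff_dvd_diff)
  show ?thesis
  proof (cases "n \<ge> 2")
    case False
    have "int p ^ Suc n dvd int p ^ 2 * Z" using False by (intro dvd_mult2 le_imp_power_dvd) simp
    then have "int p ^ Suc n dvd int p ^ 2 * Z - (int p ^ 2 * Z - int p ^ n * w)"
      using dvd by (rule dvd_diff)
    then have "int p ^ n * int p dvd int p ^ n * w" by (simp add: power_Suc2)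
    then show ?thesis using assms(2) p0 by simp
  next
    case True
    then obtain n' where n: "n = n' + 2" by (metis add.commute le_add_diff_inverse)
    have "int p ^ 2 * Z - int p ^ n * w = int p ^ 2 * (Z - int p ^ n' * w)"
      unfolding n power_add by (simp only: right_diff_distrib mult.assoc mult.commute)
    moreover have "int p ^ Suc n = int p ^ 2 * int p ^ Suc n'"
      unfolding n by (metis add_Suc add.commute power_add)
    ultimately have "int p ^ 2 * int p ^ Suc n' dvd int p ^ 2 * (Z - int p ^ n' * w)"
      using dvd by (simp only:)
    then show ?thesis using n p0 by (simp add: cong_iff_dvd_diff)
  qed
qed

lemma binary_rep_cond_unit_X:
  assumes "prime p" "\<not> int p dvd E1" "\<not> int p dvd X"
    and "[E1 * X\<^sup>2 + int p ^ a * E2 * Y\<^sup>2 = int p ^ n * w] (mod int p ^ Suc n)"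
  shows "binary_rep_cond p E1 E2 w a n"
proof -
  have mod_p: "[E1 * X\<^sup>2 + int p ^ a * E2 * Y\<^sup>2 = int p ^ n * w] (mod int p)"
    using cong_pow_imp_cong[OF _ assms(4)] by simp
  have high_a: "[int p ^ a * E2 * Y\<^sup>2 = 0] (mod int p)" if "a \<noteq> 0"
    using that by (simp add: cong_0_iff)
  show ?thesis
  proof (cases "n = 0")
    case True
    have "QuadRes (int p) (w * E1)" if "odd a"
    proof -
      have "[E1 * X\<^sup>2 = w] (mod int p)"
        using cong_add_cong_0_right[OF high_a mod_p] that True by auto
      then have "[E1 * X\<^sup>2 * E1 = w * E1] (mod int p)" by (rule cong_scalar_right)
      then have "[(E1 * X)\<^sup>2 = w * E1] (mod int p)" by (simp add: power2_eq_square ac_simps)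
      then show ?thesis unfolding QuadRes_def by blast
    qed
    then show ?thesis using True by (simp add: binary_rep_cond_def)
  next
    case False
    then have "[int p ^ n * w = 0] (mod int p)" by (simp add: cong_0_iff)
    then have zero: "[E1 * X\<^sup>2 + int p ^ a * E2 * Y\<^sup>2 = 0] (mod int p)"
      using mod_p by (rule cong_trans[rotated])
    have "a = 0"
    proof (rule ccontr)
      assume "a \<noteq> 0"
      then have "[E1 * X\<^sup>2 = 0] (mod int p)" using cong_add_cong_0_right[OF high_a zero] by simp
      then show False using prime_not_dvd_sq_mult[OF assms(1-3)] by (simp add: cong_0_iff)
    qed
    then have "QuadRes (int p) (- (E1 * E2))"
      using QuadRes_neg_mult_of_zero_mod_p[OF assms(1-3)] zero by simp
    then show ?thesis using \<open>a = 0\<close> False by (simp add: binary_rep_cond_def)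
  qed
qed

lemma cong_p_mult_level_1:
  assumes "prime p" "\<not> int p dvd u" "\<not> int p dvd w"
    and "[int p * u = int p ^ n * w] (mod int p ^ min 2 (Suc n))"
  shows "n = 1 \<and> [u = w] (mod int p)"
proof -
  have p0: "int p \<noteq> 0" using assms(1) by (simp add: prime_gt_0_nat)
  have "n = 1"
  proof (rule ccontr)
    assume "n \<noteq> 1"
    then consider "n = 0" | "n \<ge> 2" by linarith
    then show False
    proof cases
      case 1
      then have "[int p * u = w] (mod int p)" using assms(4) by simp
      then have "int p dvd w" using cong_dvd_iff dvd_triv_left by blast
      then show False using assms(3) by contradiction
    next
      case 2
      then have "int p ^ 2 dvd int p * u"
        using assms(4) by (simp add: cong_dvd_iff min_def le_imp_power_dvd)
      then show False using assms(2) p0 by (simp add: power2_eq_square)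
    qed
  qed
  moreover have "[int p * u = int p * w] (mod int p * int p)"
    using assms(4) \<open>n = 1\<close> by (simp add: power2_eq_square)
  then have "[u = w] (mod int p)" by (rule cong_cmult_leftD[OF p0])
  ultimately show ?thesis by blast
qed

lemma binary_rep_cond_unit_Y:
  assumes "prime p" "\<not> int p dvd E2" "\<not> int p dvd w" "\<not> int p dvd Y" "int p dvd X" "a \<le> 1"
    and "[E1 * X\<^sup>2 + int p ^ a * E2 * Y\<^sup>2 = int p ^ n * w] (mod int p ^ Suc n)"
  shows "binary_rep_cond p E1 E2 w a n"
proof -
  have unit: "\<not> int p dvd E2 * Y\<^sup>2" by (rule prime_not_dvd_sq_mult[OF assms(1,2,4)])
  have "[E1 * X\<^sup>2 = 0] (mod int p ^ 2)"
    using assms(5) by (auto simp: cong_0_iff power2_eq_square mult_dvd_mono)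
  then have lhs: "[int p ^ a * (E2 * Y\<^sup>2) = int p ^ n * w] (mod int p ^ min 2 (Suc n))"
    using assms(7) cong_add_cong_0_right[of _ "int p ^ min 2 (Suc n)"]
    by (metis (no_types, lifting) add.commute cong_dvd_modulus le_imp_power_dvd min.cobounded1
        min.cobounded2 mult.assoc)
  show ?thesis
  proof (cases "a = 0")
    case True
    have "n = 0"
    proof (rule ccontr)
      assume "n \<noteq> 0"
      then have "[E2 * Y\<^sup>2 = int p ^ n * w] (mod int p)"
        using cong_pow_imp_cong[OF _ lhs] True by simp
      then show False using unit \<open>n \<noteq> 0\<close> by (simp add: cong_dvd_iff)
    qed
    then show ?thesis using True by (simp add: binary_rep_cond_def)
  next
    case False
    then have a: "a = 1" using assms(6) by simp
    then have n: "n = 1" and Y: "[E2 * Y\<^sup>2 = w] (mod int p)"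
      using cong_p_mult_level_1[OF assms(1) unit assms(3)] lhs by auto
    from Y have "[E2 * Y\<^sup>2 * E2 = w * E2] (mod int p)" by (rule cong_scalar_right)
    then have "[(E2 * Y)\<^sup>2 = w * E2] (mod int p)" by (simp add: power2_eq_square ac_simps)
    then have "QuadRes (int p) (w * E2)" unfolding QuadRes_def by blast
    then show ?thesis using a n by (simp add: binary_rep_cond_def)
  qed
qed

lemma binary_rep_cond_of_cong:
  assumes "prime p" "\<not> int p dvd E1" "\<not> int p dvd E2" "\<not> int p dvd w"
  shows "[E1 * X\<^sup>2 + int p ^ a * E2 * Y\<^sup>2 = int p ^ n * w] (mod int p ^ Suc n)
    \<Longrightarrow> binary_rep_cond p E1 E2 w a n"
proof (induction n arbitrary: a X Y rule: less_induct)
  case (less n a X Y)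
  have descent: "binary_rep_cond p E1 E2 w a n"
    if a': "a = a' \<or> a = a' + 2"
      and eq: "E1 * X\<^sup>2 + int p ^ a * E2 * Y\<^sup>2 = int p ^ 2 * (E1 * X'\<^sup>2 + int p ^ a' * E2 * Y'\<^sup>2)"
    for a' X' Y'
  proof -
    obtain n' where n: "n = n' + 2"
      and "[E1 * X'\<^sup>2 + int p ^ a' * E2 * Y'\<^sup>2 = int p ^ n' * w] (mod int p ^ Suc n')"
      using binary_rep_cong_cancel_p2[OF assms(1,4)] less.prems unfolding eq by blast
    then have "binary_rep_cond p E1 E2 w a' n'" using less.IH[of n'] by simp
    then show ?thesis unfolding n using a' by (rule binary_rep_cond_add_2)
  qed
  show ?case
  proof (cases "int p dvd X")
    case False
    then show ?thesis using binary_rep_cond_unit_X[OF assms(1,2) _ less.prems] by blast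
  next
    case True
    then obtain X' where X: "X = int p * X'" by blast
    show ?thesis
    proof (cases "a \<ge> 2")
      case True
      then obtain a' where "a = a' + 2" by (metis add.commute le_add_diff_inverse)
      then show ?thesis
        by (intro descent[of a' X' Y]) (simp_all add: X power_add power2_eq_square algebra_simps)
    next
      case a: False
      show ?thesis
      proof (cases "int p dvd Y")
        case True
        then obtain Y' where "Y = int p * Y'" by blast
        then show ?thesis
          by (intro descent[of a X' Y']) (simp_all add: X power2_eq_square algebra_simps)
      next
        case False
        then show ?thesis
          using binary_rep_cond_unit_Y[OF assms(1,3,4) False \<open>int p dvd X\<close> _ less.prems] a by simp
      qed
    qed
  qed
qed

section \<open>The invariants \<open>\<nu>\<^sub>s\<close>\<close>

definition zp_scale_sq :: "nat \<Rightarrow> (nat \<Rightarrow> int) \<Rightarrow> nat \<Rightarrow> (nat \<Rightarrow> int)" where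
  "zp_scale_sq p s u = zp_mult p s (zp_of_int p (int p ^ (2 * u)))"

lemma nu_s_eq: "nu_s p as s = zp_ord p (zp_scale_sq p s (LEAST u. zp_rep p as (zp_scale_sq p s u)))"
  unfolding nu_s_def zp_scale_sq_def Let_def ..

text \<open>\<open>s = p\<^sup>k D\<close> with D a unit; D is kept as a separate sequence so that its residue mod p
  can be read off.\<close>

definition zp_pow_unit :: "nat \<Rightarrow> (nat \<Rightarrow> int) \<Rightarrow> nat \<Rightarrow> (nat \<Rightarrow> int) \<Rightarrow> bool" where
  "zp_pow_unit p s k D \<longleftrightarrow> s \<in> zp p \<and> zp_unit p D \<and> (\<forall>n. [s n = int p ^ k * D n] (mod int p ^ n))"

lemma zp_pow_unit_scale_sq:
  assumes "prime p" "zp_pow_unit p s k D"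
  shows "zp_pow_unit p (zp_scale_sq p s u) (2 * u + k) D"
  unfolding zp_pow_unit_def
proof (intro conjI allI)
  have p0: "p > 0" using assms(1) prime_gt_0_nat by blast
  show "zp_scale_sq p s u \<in> zp p" "zp_unit p D"
    using assms(2) unfolding zp_scale_sq_def zp_pow_unit_def
    by (auto intro: zp_mult_in_zp[OF p0] zp_of_int_in_zp[OF p0])
  fix n
  have "[zp_scale_sq p s u n = s n * int p ^ (2 * u)] (mod int p ^ n)"
    unfolding zp_scale_sq_def zp_mult_def zp_of_int_def by (simp add: cong_def mod_mult_right_eq)
  also have "[s n * int p ^ (2 * u) = int p ^ k * D n * int p ^ (2 * u)] (mod int p ^ n)"
    using assms(2) unfolding zp_pow_unit_def by (blast intro: cong_scalar_right)
  also have "int p ^ k * D n * int p ^ (2 * u) = int p ^ (2 * u + k) * D n"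
    by (simp add: power_add ac_simps)
  finally show "[zp_scale_sq p s u n = int p ^ (2 * u + k) * D n] (mod int p ^ n)" .
qed

lemma zp_pow_unit_eq_0:
  assumes "zp_pow_unit p s k D" "T \<le> k"
  shows "s T = 0"
  using assms zp_eq_0_iff[of s p T] unfolding zp_pow_unit_def
  by (meson dvd_mult2 le_imp_power_dvd)

lemma zp_ord_pow_unit:
  assumes "prime p" "zp_pow_unit p s k D"
  shows "zp_ord p s = k"
proof -
  have s: "s \<in> zp p" and D: "zp_unit p D" and c: "\<And>n. [s n = int p ^ k * D n] (mod int p ^ n)"
    using assms(2) by (auto simp: zp_pow_unit_def)
  have "s (Suc m) \<noteq> 0 \<longleftrightarrow> k \<le> m" for m
  proof
    assume "s (Suc m) \<noteq> 0"
    then show "k \<le> m" using zp_pow_unit_eq_0[OF assms(2), of "Suc m"] by linarith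
  next
    assume "k \<le> m"
    have "\<not> int p ^ k * int p dvd int p ^ k * D (Suc m)"
      using zp_unit_not_dvd[OF D, of "Suc m"] assms(1) by (simp add: prime_gt_0_nat)
    moreover have "int p ^ k * int p dvd int p ^ Suc m"
      using \<open>k \<le> m\<close> by (metis Suc_le_mono le_imp_power_dvd power_Suc2)
    ultimately show "s (Suc m) \<noteq> 0" using zp_eq_0_iff[OF s c] dvd_trans by blast
  qed
  then show ?thesis unfolding zp_ord_def by (intro Least_equality) auto
qed

lemma nu_s_pow_unit:
  assumes "prime p" "zp_pow_unit p s k D" "zp_rep p as (zp_scale_sq p s u)"
  shows "\<exists>v \<le> u. zp_rep p as (zp_scale_sq p s v) \<and> nu_s p as s = 2 * v + k"
proof -
  let ?v = "LEAST u. zp_rep p as (zp_scale_sq p s u)"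
  have "?v \<le> u" "zp_rep p as (zp_scale_sq p s ?v)"
    using assms(3) by (auto intro: Least_le LeastI)
  moreover have "nu_s p as s = 2 * ?v + k"
    unfolding nu_s_eq by (rule zp_ord_pow_unit[OF assms(1) zp_pow_unit_scale_sq[OF assms(1,2)]])
  ultimately show ?thesis by blast
qed

lemma nu_s_le_of_rep_multiples:
  assumes "prime p" "zp_pow_unit p s k D" "k \<le> 1"
    and "\<And>y. y \<in> zp p \<Longrightarrow> y B = 0 \<Longrightarrow> zp_rep p as y"
  shows "nu_s p as s \<le> B + 1"
proof -
  define u where "u = (B + 1 - k) div 2"
  have "B \<le> 2 * u + k" "2 * u + k \<le> B + 1" unfolding u_def using assms(3) by auto
  then have "zp_rep p as (zp_scale_sq p s u)"
    using zp_pow_unit_scale_sq[OF assms(1,2)] zp_pow_unit_eq_0 assms(4)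
    by (meson zp_pow_unit_def)
  then show ?thesis using nu_s_pow_unit[OF assms(1,2)] \<open>2 * u + k \<le> B + 1\<close> by fastforce
qed

lemma Max_le_Max_remove_Suc:
  fixes f :: "'a \<Rightarrow> nat"
  assumes "finite S" "s1 \<in> S" "s2 \<in> S" "s1 \<noteq> s2" "B \<le> f s1" "B \<le> f s2"
    and "\<And>s. s \<in> S \<Longrightarrow> f s \<le> B + 1"
  shows "Max (f ` S) \<le> Max (f ` (S - {s0})) + 1"
proof -
  have "Max (f ` S) \<le> B + 1" using assms by (subst Max_le_iff) auto
  moreover obtain t where "t \<in> S - {s0}" "B \<le> f t" using assms by (cases "s1 = s0") auto
  then have "B \<le> Max (f ` (S - {s0}))"
    using assms(1) by (meson Max_ge finite_Diff finite_imageI imageI order_trans)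
  ultimately show ?thesis by simp
qed

section \<open>Diagonal lattices whose first three components are isotropic\<close>

locale isotropic_head_lattice =
  fixes p k :: nat and eps :: "nat \<Rightarrow> (nat \<Rightarrow> int)" and e :: "nat \<Rightarrow> nat" and d :: "nat \<Rightarrow> int"
  assumes prime: "prime p" and odd: "odd p" and rank: "k \<ge> 4"
    and nonsquare: "zp_nonsquare_unit p d"
    and eps_unit: "\<And>i. i < k \<Longrightarrow> zp_unit p (eps i)"
    and e_0: "e 0 = 0"
    and e_mono: "\<And>i j. i \<le> j \<Longrightarrow> j < k \<Longrightarrow> e i \<le> e j"
    and isotropic:
      "zp_isotropic p (map (\<lambda>i. zp_mult p (zp_of_int p (int p ^ e i)) (eps i)) [0..<3])"
begin

abbreviation coeff :: "nat \<Rightarrow> nat \<Rightarrow> int" where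
  "coeff i \<equiv> zp_mult p (zp_of_int p (int p ^ e i)) (eps i)"

abbreviation lat :: "(nat \<Rightarrow> int) list" where
  "lat \<equiv> map coeff [0..<k]"

lemma p_pos: "p > 0"
  using prime prime_gt_0_nat by blast

lemma coeff_in_zp: "i < k \<Longrightarrow> coeff i \<in> zp p"
  using eps_unit zp_mult_in_zp[OF p_pos zp_of_int_in_zp[OF p_pos]] by (simp add: zp_unit_def)

lemma coeff_cong: "[coeff i n = int p ^ e i * eps i n] (mod int p ^ n)"
  by (simp add: zp_mult_def zp_of_int_def cong_def mod_mult_left_eq)

lemma eps_not_dvd: "i < k \<Longrightarrow> 1 \<le> n \<Longrightarrow> \<not> int p dvd eps i n"
  using eps_unit zp_unit_not_dvd by blast

lemma rep_of_head_isotropic: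
  assumes "m \<le> k" "length vs = m" "set vs \<subseteq> zp p" "qf p (map coeff [0..<m]) vs = zp_zero"
    and "j < m" "zp_unit p (vs!j)" "y \<in> zp p" "y (e j) = 0"
  shows "zp_rep p lat y"
proof -
  let ?ws = "vs @ replicate (length (map coeff [m..<k])) zp_zero"
  have lat: "lat = map coeff [0..<m] @ map coeff [m..<k]"
    using assms(1) upt_add_eq_append[of 0 m "k - m"] by simp
  show ?thesis
  proof (rule zp_rep_of_isotropic_unit_coord[OF prime odd,
        where j = j and e = "e j" and eps = "eps j"])
    show "length ?ws = length lat" "qf p lat ?ws = zp_zero"
      using assms(1,2,4) qf_append_zero[of vs "map coeff [0..<m]" p "map coeff [m..<k]"]
      unfolding lat by simp_all
    show "set ?ws \<subseteq> zp p" using assms(3) zp_zero_in_zp[OF p_pos] by auto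
    show "zp_unit p (?ws!j)" using assms(2,5,6) by (simp add: nth_append)
  qed (use assms(1,5,7,8) eps_unit in auto)
qed

lemma rep_multiples_e2:
  assumes "y \<in> zp p" "y (e 2) = 0"
  shows "zp_rep p lat y"
proof -
  have "set (map coeff [0..<3]) \<subseteq> zp p" using coeff_in_zp rank by auto
  then obtain vs j where "length vs = 3" "set vs \<subseteq> zp p" "qf p (map coeff [0..<3]) vs = zp_zero"
    and j: "j < 3" "zp_unit p (vs!j)"
    using zp_isotropic_primitive[OF prime _ isotropic] by auto
  moreover have "y (e j) = 0"
    using zp_mod_le[OF assms(1) e_mono[of j 2]] assms(2) j rank by simp
  ultimately show ?thesis using rep_of_head_isotropic[of 3] assms(1) rank by simp
qed

lemma sqrt_neg_ratio:
  assumes "QuadRes (int p) (- (eps 0 1 * eps 1 1))"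
  shows "\<exists>r \<in> zp p. \<forall>n. [eps 0 n * (r n)\<^sup>2 + eps 1 n = 0] (mod int p ^ n)"
proof -
  have eps: "eps 0 \<in> zp p" "eps 1 \<in> zp p" "zp_unit p (eps 0)"
    using eps_unit rank by (auto simp: zp_unit_def)
  obtain I where I: "I \<in> zp p" "\<And>n. [eps 0 n * I n = 1] (mod int p ^ n)"
    using zp_unit_inverse[OF prime eps(3)] by blast
  define c where "c = zp_of_seq p (\<lambda>n. - eps 1 n * I n)"
  have c: "c \<in> zp p" "\<And>n. [c n = - eps 1 n * I n] (mod int p ^ n)"
    unfolding c_def
    by (intro zp_of_seq_in_zp[OF _ p_pos] coherent_mult coherent_uminus zp_coherent eps I)
      (rule zp_of_seq_cong)
  obtain r0 where r0: "[r0\<^sup>2 = - (eps 0 1 * eps 1 1)] (mod int p)"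
    using assms unfolding QuadRes_def by blast
  have "[(r0 * I 1)\<^sup>2 = - (eps 0 1 * eps 1 1) * (I 1)\<^sup>2] (mod int p)"
    using cong_scalar_right[OF r0] by (simp add: power_mult_distrib)
  also have "- (eps 0 1 * eps 1 1) * (I 1)\<^sup>2 = (- eps 1 1 * I 1) * (eps 0 1 * I 1)"
    by (simp add: power2_eq_square)
  also have "[(- eps 1 1 * I 1) * (eps 0 1 * I 1) = - eps 1 1 * I 1] (mod int p)"
    using cong_scalar_left[OF I(2)[of 1], of "- eps 1 1 * I 1"] by simp
  also have "[- eps 1 1 * I 1 = c 1] (mod int p)" using c(2)[of 1] by (simp add: cong_sym)
  finally have root: "[(r0 * I 1)\<^sup>2 = c 1] (mod int p)" .
  have "\<not> int p dvd - (eps 0 1 * eps 1 1)"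
    using prime_not_dvd_mult[OF prime eps_not_dvd eps_not_dvd] rank by simp
  then have "\<not> int p dvd r0"
    using r0 cong_dvd_iff by (metis dvd_mult2 power2_eq_square)
  moreover have "\<not> int p dvd I 1"
    using I(2)[of 1] prime_not_dvd_1[OF prime] cong_dvd_iff dvd_mult by (metis power_one_right)
  ultimately obtain r where r: "r \<in> zp p" "\<And>n. [(r n)\<^sup>2 = c n] (mod int p ^ n)"
    using zp_sqrt[OF prime odd c(1) root] prime_not_dvd_mult[OF prime] by blast
  have "[eps 0 n * (r n)\<^sup>2 + eps 1 n = 0] (mod int p ^ n)" for n
  proof -
    have "[eps 0 n * (r n)\<^sup>2 + eps 1 n = eps 0 n * (- eps 1 n * I n) + eps 1 n] (mod int p ^ n)"
      using cong_trans[OF r(2) c(2)] by (intro cong_add cong_scalar_left) simp_all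
    also have "eps 0 n * (- eps 1 n * I n) + eps 1 n = eps 1 n * (1 - eps 0 n * I n)"
      by (simp add: algebra_simps)
    also have "[\<dots> = eps 1 n * (1 - 1)] (mod int p ^ n)"
      by (intro cong_scalar_left cong_diff cong_refl I(2))
    finally show ?thesis by simp
  qed
  then show ?thesis using r(1) by blast
qed

lemma rep_multiples_e1:
  assumes "QuadRes (int p) (- (eps 0 1 * eps 1 1))" "even (e 1)" "y \<in> zp p" "y (e 1) = 0"
  shows "zp_rep p lat y"
proof -
  obtain r where r: "r \<in> zp p" "\<And>n. [eps 0 n * (r n)\<^sup>2 + eps 1 n = 0] (mod int p ^ n)"
    using sqrt_neg_ratio[OF assms(1)] by blast
  obtain h where h: "e 1 = 2 * h" using assms(2) by blast
  define v where "v = zp_of_seq p (\<lambda>n. int p ^ h * r n)"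
  have v: "v \<in> zp p"
    unfolding v_def
    by (intro zp_of_seq_in_zp[OF _ p_pos] coherent_mult coherent_const zp_coherent r(1))
  let ?one = "zp_of_int p 1"
  have "qf p (map coeff [0..<2]) [v, ?one] = zp_zero"
  proof (rule qf_eqI[OF zp_zero_in_zp[OF p_pos]])
    fix n
    have "[coeff 0 n * (v n)\<^sup>2 + coeff 1 n * (?one n)\<^sup>2
        = (int p ^ e 0 * eps 0 n) * (int p ^ h * r n)\<^sup>2 + (int p ^ e 1 * eps 1 n) * 1\<^sup>2]
        (mod int p ^ n)"
      unfolding v_def
      by (intro cong_add cong_mult coeff_cong cong_pow zp_of_seq_cong zp_of_int_cong)
    also have "(int p ^ e 0 * eps 0 n) * (int p ^ h * r n)\<^sup>2 + (int p ^ e 1 * eps 1 n) * 1\<^sup>2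
        = int p ^ e 1 * (eps 0 n * (r n)\<^sup>2 + eps 1 n)"
      using e_0 h by (simp add: power_mult[symmetric] algebra_simps)
    also have "[int p ^ e 1 * (eps 0 n * (r n)\<^sup>2 + eps 1 n) = int p ^ e 1 * 0] (mod int p ^ n)"
      by (intro cong_scalar_left r(2))
    finally show "[(\<Sum>i<length (map coeff [0..<2]).
        (map coeff [0..<2] ! i) n * (([v, ?one] ! i) n)\<^sup>2) = zp_zero n] (mod int p ^ n)"
      by (simp add: numeral_2_eq_2 zp_zero_def)
  qed
  moreover have "zp_unit p ?one"
    using prime_not_dvd_1[OF prime] zp_of_int_in_zp[OF p_pos]
    by (simp add: zp_unit_def zp_of_int_def dvd_eq_mod_eq_0)
  ultimately show ?thesis
    using rep_of_head_isotropic[of 2 "[v, ?one]" 1] v zp_of_int_in_zp[OF p_pos] assms(3,4) rank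
    by simp
qed

lemma diag_sum_low_level:
  assumes "N < e 2"
  shows "[(\<Sum>i<k. coeff i (Suc N) * (X i)\<^sup>2)
    = eps 0 (Suc N) * (X 0)\<^sup>2 + int p ^ e 1 * eps 1 (Suc N) * (X 1)\<^sup>2] (mod int p ^ Suc N)"
proof -
  let ?m = "Suc N" and ?t = "\<lambda>i. int p ^ e i * eps i (Suc N) * (X i)\<^sup>2"
  have reduce: "[coeff i ?m * (X i)\<^sup>2 = ?t i] (mod int p ^ ?m)" for i
    using coeff_cong by (rule cong_scalar_right)
  have high: "[?t i = 0] (mod int p ^ ?m)" if "2 \<le> i" "i < k" for i
  proof -
    have "int p ^ ?m dvd int p ^ e i" using e_mono[OF that] assms by (intro le_imp_power_dvd) simp
    then show ?thesis by (simp add: cong_0_iff mult.assoc)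
  qed
  have "[coeff i ?m * (X i)\<^sup>2 = (if i < 2 then ?t i else 0)] (mod int p ^ ?m)" if "i < k" for i
    using reduce[of i] high[of i] that by (cases "i < 2") (auto intro: cong_trans)
  then have "[(\<Sum>i<k. coeff i ?m * (X i)\<^sup>2) = (\<Sum>i<k. if i < 2 then ?t i else 0)] (mod int p ^ ?m)"
    by (intro cong_sum) simp
  also have "(\<Sum>i<k. if i < 2 then ?t i else 0) = (\<Sum>i<2. ?t i)"
    using rank by (intro sum.mono_neutral_cong_right) auto
  finally show ?thesis using e_0 by (simp add: numeral_2_eq_2)
qed

lemma rep_low_level_binary:
  assumes "zp_rep p lat y" "zp_pow_unit p y N D" "N < e 2"
  shows "binary_rep_cond p (eps 0 1) (eps 1 1) (D 1) (e 1) N"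
proof -
  obtain xs where xs: "length xs = length lat" "qf p lat xs = y"
    using assms(1) unfolding zp_rep_def by blast
  let ?m = "Suc N" and ?X = "\<lambda>i. (xs!i) (Suc N)"
  have D: "zp_unit p D" and y: "[y ?m = int p ^ N * D ?m] (mod int p ^ ?m)"
    using assms(2) unfolding zp_pow_unit_def by blast+
  have "[(\<Sum>i<k. coeff i ?m * (?X i)\<^sup>2) = y ?m] (mod int p ^ ?m)"
    using qf_cong[of p lat xs ?m] xs by (simp add: cong_sym_eq)
  then have "[eps 0 ?m * (?X 0)\<^sup>2 + int p ^ e 1 * eps 1 ?m * (?X 1)\<^sup>2 = int p ^ N * D ?m]
      (mod int p ^ Suc N)"
    using diag_sum_low_level[OF assms(3), of ?X] y by (meson cong_sym cong_trans)
  moreover have "\<not> int p dvd eps 0 ?m" "\<not> int p dvd eps 1 ?m" "\<not> int p dvd D ?m"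
    using eps_not_dvd rank zp_unit_not_dvd[OF D] by auto
  ultimately have "binary_rep_cond p (eps 0 ?m) (eps 1 ?m) (D ?m) (e 1) N"
    using binary_rep_cond_of_cong[OF prime] by blast
  moreover have "[eps 0 ?m = eps 0 1] (mod int p)" "[eps 1 ?m = eps 1 1] (mod int p)"
    "[D ?m = D 1] (mod int p)"
    using eps_unit rank D zp_cong_1 unfolding zp_unit_def by auto
  ultimately show ?thesis by (rule binary_rep_cond_cong)
qed

lemma nu_s_le_e2_Suc:
  assumes "zp_pow_unit p s j D" "j \<le> 1"
  shows "nu_s p lat s \<le> e 2 + 1"
  using nu_s_le_of_rep_multiples[OF prime assms rep_multiples_e2] .

lemma nu_s_below_e2:
  assumes "zp_pow_unit p s j D" "j \<le> 1" "nu_s p lat s < e 2"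
  shows "nu_s p lat s mod 2 = j \<and> binary_rep_cond p (eps 0 1) (eps 1 1) (D 1) (e 1) (nu_s p lat s)"
proof -
  define u where "u = (e 2 + 1 - j) div 2"
  have "e 2 \<le> 2 * u + j" unfolding u_def using assms(2) by auto
  then have "zp_rep p lat (zp_scale_sq p s u)"
    using zp_pow_unit_scale_sq[OF prime assms(1)] zp_pow_unit_eq_0 rep_multiples_e2
    by (meson zp_pow_unit_def)
  then obtain v where v: "zp_rep p lat (zp_scale_sq p s v)" "nu_s p lat s = 2 * v + j"
    using nu_s_pow_unit[OF prime assms(1)] by blast
  then have "binary_rep_cond p (eps 0 1) (eps 1 1) (D 1) (e 1) (2 * v + j)"
    using rep_low_level_binary[OF v(1) zp_pow_unit_scale_sq[OF prime assms(1)]] assms(3) by simp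
  then show ?thesis using v(2) assms(2) by simp
qed

abbreviation one :: "nat \<Rightarrow> int" where "one \<equiv> zp_of_int p 1"
abbreviation pp :: "nat \<Rightarrow> int" where "pp \<equiv> zp_of_int p (int p)"
abbreviation pd :: "nat \<Rightarrow> int" where "pd \<equiv> zp_mult p pp d"

lemma SC_eq: "SC p d = {one, d, pp, pd}"
  by (simp add: SC_def)

lemma one_unit: "zp_unit p one"
  using prime_not_dvd_1[OF prime] zp_of_int_in_zp[OF p_pos]
  by (simp add: zp_unit_def zp_of_int_def dvd_eq_mod_eq_0)

lemma d_unit: "zp_unit p d"
  using nonsquare by (simp add: zp_nonsquare_unit_def)

lemma pow_unit_one: "zp_pow_unit p one 0 one"
  using one_unit by (simp add: zp_pow_unit_def zp_unit_def)

lemma pow_unit_d: "zp_pow_unit p d 0 d"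
  using d_unit by (simp add: zp_pow_unit_def zp_unit_def)

lemma pow_unit_pp: "zp_pow_unit p pp 1 one"
  using one_unit zp_of_int_in_zp[OF p_pos]
  by (simp add: zp_pow_unit_def zp_of_int_def cong_def mod_mult_right_eq)

lemma pow_unit_pd: "zp_pow_unit p pd 1 d"
  using d_unit zp_mult_in_zp[OF p_pos zp_of_int_in_zp[OF p_pos]]
  by (simp add: zp_pow_unit_def zp_unit_def zp_mult_def zp_of_int_def cong_def mod_mult_left_eq)

lemma d_not_QuadRes: "\<not> QuadRes (int p) (d 1)"
proof
  assume "QuadRes (int p) (d 1)"
  then obtain r where r: "[r\<^sup>2 = d 1] (mod int p)" unfolding QuadRes_def by blast
  have "\<not> int p dvd r"
    using r zp_unit_not_dvd[OF d_unit, of 1] cong_dvd_iff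
    by (metis dvd_mult2 power2_eq_square order_refl)
  then obtain x where x: "x \<in> zp p" "\<And>n. [(x n)\<^sup>2 = d n] (mod int p ^ n)"
    using zp_sqrt[OF prime odd, of d r] r d_unit unfolding zp_unit_def by blast
  have "d = zp_mult p x x"
    using x(2) zp_mod_self[of d p] d_unit
    by (auto simp: zp_mult_def cong_def power2_eq_square zp_unit_def)
  then show False using nonsquare x(1) unfolding zp_nonsquare_unit_def zp_square_def by blast
qed

lemma pp_ne_pd: "pp \<noteq> pd"
proof
  assume eq: "pp = pd"
  have "[int p * 1 = int p * d 2] (mod int p * int p)"
    using fun_cong[OF eq, of 2]
    by (simp add: zp_mult_def zp_of_int_def cong_def power2_eq_square mod_mult_left_eq)
  then have "[1 = d 2] (mod int p)" by (rule cong_cmult_leftD[rotated]) (use p_pos in simp)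
  moreover have "[d 2 = d 1] (mod int p)"
    using zp_cong_1[of d p 2] d_unit by (simp add: zp_unit_def)
  ultimately have "[1\<^sup>2 = d 1] (mod int p)" by (simp add: cong_trans)
  then show False using d_not_QuadRes unfolding QuadRes_def by blast
qed

lemma odd_e1_class_ge_e2:
  assumes "odd (e 1)" "j \<le> 1" "zp_pow_unit p s j one" "zp_pow_unit p t j d"
  shows "e 2 \<le> nu_s p lat s \<or> e 2 \<le> nu_s p lat t"
proof (rule ccontr)
  define E where "E = (if j = 0 then eps 0 1 else eps 1 1)"
  assume "\<not> ?thesis"
  then have
    "binary_rep_cond p (eps 0 1) (eps 1 1) (one 1) (e 1) (nu_s p lat s) \<and> nu_s p lat s mod 2 = j"
    "binary_rep_cond p (eps 0 1) (eps 1 1) (d 1) (e 1) (nu_s p lat t) \<and> nu_s p lat t mod 2 = j"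
    using nu_s_below_e2[OF assms(3,2)] nu_s_below_e2[OF assms(4,2)] by auto
  moreover have "one 1 = 1" using prime_gt_1_nat[OF prime] by (simp add: zp_of_int_def)
  ultimately have "QuadRes (int p) (1 * E)" "QuadRes (int p) (d 1 * E)"
    using assms(1,2) unfolding binary_rep_cond_def E_def by (auto simp: odd_iff_mod_2_eq_one)
  moreover have "\<not> int p dvd E" unfolding E_def using eps_not_dvd rank by auto
  ultimately show False
    using QuadRes_cancel[OF prime, of E "d 1"] d_not_QuadRes by (simp add: mult.commute)
qed

lemma even_e1_nonunit_class_below_e2:
  assumes "even (e 1)" "zp_pow_unit p s 1 D" "nu_s p lat s < e 2"
  shows "e 1 < nu_s p lat s \<and> QuadRes (int p) (- (eps 0 1 * eps 1 1))"
  using nu_s_below_e2[OF assms(2) _ assms(3)] assms(1)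
  by (simp add: binary_rep_cond_def odd_iff_mod_2_eq_one)

lemma nu_s_le_e2_Suc_SC: "s \<in> SC p d \<Longrightarrow> nu_s p lat s \<le> e 2 + 1"
  using nu_s_le_e2_Suc pow_unit_one pow_unit_d pow_unit_pp pow_unit_pd by (auto simp: SC_eq)

lemma nu_bound_odd_e1:
  assumes "odd (e 1)"
  shows "Max (nu_s p lat ` SC p d) \<le> Max (nu_s p lat ` (SC p d - {s0})) + 1"
proof -
  obtain s where s: "s \<in> {one, d}" "e 2 \<le> nu_s p lat s"
    using odd_e1_class_ge_e2[OF assms _ pow_unit_one pow_unit_d] by auto
  obtain t where t: "t \<in> {pp, pd}" "e 2 \<le> nu_s p lat t"
    using odd_e1_class_ge_e2[OF assms _ pow_unit_pp pow_unit_pd] by auto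
  have "s 1 \<noteq> 0" "t 1 = 0"
    using s(1) t(1) one_unit d_unit by (auto simp: zp_unit_def zp_mult_def zp_of_int_def)
  then have "s \<noteq> t" by auto
  moreover have "s \<in> SC p d" "t \<in> SC p d" using s(1) t(1) by (auto simp: SC_eq)
  ultimately show ?thesis
    using s(2) t(2) nu_s_le_e2_Suc_SC
    by (intro Max_le_Max_remove_Suc[of "SC p d" s t]) (auto simp: SC_eq)
qed

lemma nu_bound_even_e1_QuadRes:
  assumes "even (e 1)" "QuadRes (int p) (- (eps 0 1 * eps 1 1))" "e 1 + 1 < e 2"
  shows "Max (nu_s p lat ` SC p d) \<le> Max (nu_s p lat ` (SC p d - {s0})) + 1"
proof -
  have le: "nu_s p lat s \<le> e 1 + 1" if "zp_pow_unit p s j D" "j \<le> 1" for s j D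
    using nu_s_le_of_rep_multiples[OF prime that rep_multiples_e1[OF assms(2,1)]] .
  have ge: "e 1 + 1 \<le> nu_s p lat s" if "zp_pow_unit p s 1 D" for s D
    using even_e1_nonunit_class_below_e2[OF assms(1) that] assms(3) by fastforce
  show ?thesis
    using pp_ne_pd ge[OF pow_unit_pp] ge[OF pow_unit_pd]
      le[OF pow_unit_one] le[OF pow_unit_d] le[OF pow_unit_pp] le[OF pow_unit_pd]
    by (intro Max_le_Max_remove_Suc[of "SC p d" pp pd "e 1 + 1"]) (auto simp: SC_eq)
qed

lemma nu_bound_even_e1_otherwise:
  assumes "even (e 1)" "\<not> (QuadRes (int p) (- (eps 0 1 * eps 1 1)) \<and> e 1 + 1 < e 2)"
  shows "Max (nu_s p lat ` SC p d) \<le> Max (nu_s p lat ` (SC p d - {s0})) + 1"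
proof -
  have ge: "e 2 \<le> nu_s p lat s" if "zp_pow_unit p s 1 D" for s D
    using even_e1_nonunit_class_below_e2[OF assms(1) that] assms(2) by fastforce
  show ?thesis
    using pp_ne_pd ge[OF pow_unit_pp] ge[OF pow_unit_pd] nu_s_le_e2_Suc_SC
    by (intro Max_le_Max_remove_Suc[of "SC p d" pp pd "e 2"]) (auto simp: SC_eq)
qed

theorem nu_le_nu'_Suc: "nu p d lat \<le> nu' p d lat + 1"
  unfolding nu_def nu'_def Let_def
  using nu_bound_odd_e1 nu_bound_even_e1_QuadRes nu_bound_even_e1_otherwise by blast

end

theorem lemma2p6:
  fixes p k :: nat and eps :: "nat \<Rightarrow> (nat \<Rightarrow> int)" and e :: "nat \<Rightarrow> nat"
    and d :: "nat \<Rightarrow> int"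
  assumes "prime p" and "odd p" and "k \<ge> 4"
    and "zp_nonsquare_unit p d"
    and "\<And>i. i < k \<Longrightarrow> zp_unit p (eps i)"
    and "e 0 = 0"
    and "\<And>i j. i \<le> j \<Longrightarrow> j < k \<Longrightarrow> e i \<le> e j"
    and "zp_isotropic p (map (\<lambda>i. zp_mult p (zp_of_int p (int p ^ e i)) (eps i)) [0..<3])"
  shows "nu p d (map (\<lambda>i. zp_mult p (zp_of_int p (int p ^ e i)) (eps i)) [0..<k])
         \<le> nu' p d (map (\<lambda>i. zp_mult p (zp_of_int p (int p ^ e i)) (eps i)) [0..<k]) + 1"
proof -
  interpret isotropic_head_lattice p k eps e d
    using assms by unfold_locales
  show ?thesis by (rule nu_le_nu'_Suc)
qed

end
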